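(* Let $D$ be a set of pairwise intersecting closed disks in the plane. Let $D'$ be the set of disks obtained from $D$ by multiplying the radius of each disk by $2/\sqrt{3}$ while keeping its center. Then all disks in $D'$ have a common point. Moreover, the factor $2/\sqrt{3}$ is tight: for every $\lambda<2/\sqrt{3}$ there exists a set of pairwise intersecting closed disks such that the disks obtained by multiplying their radii by $\lambda$ (keeping centers) have no common point.
   Context: Two disks intersect if they have at least one common point (touching counts as intersecting). *)

theory Defs
  imports "HOL-Analysis.Analysis"
begin

type_synonym disk = "(real^2) \<times> real"

definition disk_set :: "disk \<Rightarrow> (real^2) set" where
  "disk_set d = cball (fst d) (snd d)"

definition valid_disks :: "disk set \<Rightarrow> bool" where
  "valid_disks D \<longleftrightarrow> (\<forall>d\<in>D. snd d > 0)"

definition pairwise_intersecting :: "disk set \<Rightarrow> bool" where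
  "pairwise_intersecting D \<longleftrightarrow> (\<forall>d1\<in>D. \<forall>d2\<in>D. disk_set d1 \<inter> disk_set d2 \<noteq> {})"

definition scale_disk :: "real \<Rightarrow> disk \<Rightarrow> disk" where
  "scale_disk k d = (fst d, k * snd d)"

definition has_common_point :: "disk set \<Rightarrow> bool" where
  "has_common_point D \<longleftrightarrow> (\<exists>p. \<forall>d\<in>D. p \<in> disk_set d)"

end

theory Submission
  imports Defs
begin

(*
  A family of closed balls B(c_i, sqrt Q_i) has a common point as soon as, for every
  probability vector u, the weighted variance of the centres, sum over i < j of
  u_i u_j |c_i - c_j|^2, is at most sum u_i Q_i: the point is the barycentre sum u_i c_i for
  the u maximising the difference of the two sides. For three pairwise intersecting disks
  |c_i - c_j| <= r_i + r_j, and with Q_i = 4/3 r_i^2 the condition becomes a sum-of-squares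
  inequality, so any three disks scaled by 2/sqrt 3 meet. Helly's theorem in the plane,
  together with compactness for infinite families, does the rest.
  The factor is attained by three unit disks centred at the vertices of an equilateral
  triangle of side 2: they touch pairwise, but every point of the plane is at distance at
  least the circumradius 2/sqrt 3 from one of the vertices.
*)

lemma nonpos_if_linear_le_quadratic:
  fixes \<delta> M :: real
  assumes "0 \<le> M" and le: "\<And>t. 0 < t \<Longrightarrow> t \<le> 1 \<Longrightarrow> t * \<delta> \<le> t\<^sup>2 * M"
  shows "\<delta> \<le> 0"
proof (rule ccontr)
  assume "\<not> \<delta> \<le> 0"
  define t where "t = \<delta> / (\<delta> + M)"
  have t: "0 < t" "t \<le> 1"
    using \<open>\<not> \<delta> \<le> 0\<close> \<open>0 \<le> M\<close> by (auto simp: t_def)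
  then have "\<delta> \<le> t * M"
    using le[OF t] by (simp add: power2_eq_square)
  moreover have "t * M < \<delta>"
    using \<open>\<not> \<delta> \<le> 0\<close> \<open>0 \<le> M\<close> by (simp add: t_def field_simps)
  ultimately show False by simp
qed

(*
  A pair (a, c) stands for the ball around c of squared radius c . c - a. The common point is
  the second component of a maximiser of the concave function (a, q) |-> a - q . q on the hull:
  moving the maximiser towards a vertex does not increase it, and the first-order term of
  that move is the required inequality.
*)

lemma common_point_of_balls_from_hull:
  fixes P :: "(real \<times> 'a::real_inner) set"
  assumes "finite P"
    and hull_below: "\<And>a q. (a, q) \<in> convex hull P \<Longrightarrow> a \<le> q \<bullet> q"
  shows "\<exists>p. \<forall>(a, c)\<in>P. (dist p c)\<^sup>2 \<le> c \<bullet> c - a"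
proof (cases "P = {}")
  case False
  define H where "H = (\<lambda>m :: real \<times> 'a. fst m - snd m \<bullet> snd m)"
  have "continuous_on (convex hull P) H"
    unfolding H_def by (intro continuous_intros)
  moreover have "convex hull P \<noteq> {}"
    using False by simp
  ultimately obtain m where m: "m \<in> convex hull P" and max: "\<And>y. y \<in> convex hull P \<Longrightarrow> H y \<le> H m"
    using continuous_attains_sup[OF finite_imp_compact_convex_hull[OF \<open>finite P\<close>]] by metis
  obtain A p where m_eq: "m = (A, p)" by fastforce
  have "H m \<le> 0"
    using hull_below m by (simp add: H_def m_eq)
  have "(dist p c)\<^sup>2 \<le> c \<bullet> c - a" if "(a, c) \<in> P" for a c
  proof -
    define \<delta> where "\<delta> = (dist p c)\<^sup>2 - c \<bullet> c + a - H m"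
    have "\<delta> \<le> 0"
    proof (rule nonpos_if_linear_le_quadratic)
      fix t :: real assume "0 < t" "t \<le> 1"
      then have "(1 - t) *\<^sub>R m + t *\<^sub>R (a, c) \<in> convex hull P"
        using m that by (intro convexD_alt) (auto intro: hull_inc)
      then have "H ((1 - t) *\<^sub>R m + t *\<^sub>R (a, c)) \<le> H m" by (rule max)
      moreover have "H ((1 - t) *\<^sub>R m + t *\<^sub>R (a, c)) - H m = t * \<delta> - t\<^sup>2 * (dist p c)\<^sup>2"
        unfolding H_def \<delta>_def m_eq dist_norm power2_norm_eq_inner
        by (simp add: inner_commute algebra_simps power2_eq_square)
      ultimately show "t * \<delta> \<le> t\<^sup>2 * (dist p c)\<^sup>2" by simp
    qed simp
    with \<open>H m \<le> 0\<close> show ?thesis by (simp add: \<delta>_def)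
  qed
  then show ?thesis by blast
qed simp

lemma weighted_variance_3:
  fixes a b c :: "'a::real_inner"
  assumes "u + v + w = 1"
  shows "u * (a \<bullet> a) + v * (b \<bullet> b) + w * (c \<bullet> c)
           - (u *\<^sub>R a + v *\<^sub>R b + w *\<^sub>R c) \<bullet> (u *\<^sub>R a + v *\<^sub>R b + w *\<^sub>R c)
         = u * v * (dist a b)\<^sup>2 + u * w * (dist a c)\<^sup>2 + v * w * (dist b c)\<^sup>2"
proof -
  have w: "w = 1 - u - v" using assms by simp
  show ?thesis
    unfolding w dist_norm power2_norm_eq_inner
    by (simp add: inner_commute algebra_simps)
qed

lemma weighted_sq_sum_le:
  fixes u v w x y z :: real
  assumes "0 \<le> u" "0 \<le> v" "0 \<le> w" "u + v + w = 1"
  shows "u * v * (x + y)\<^sup>2 + u * w * (x + z)\<^sup>2 + v * w * (y + z)\<^sup>2 \<le> 4/3 * (u * x\<^sup>2 + v * y\<^sup>2 + w * z\<^sup>2)"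
proof -
  have "(u + v + w) * (4/3 * (u * x\<^sup>2 + v * y\<^sup>2 + w * z\<^sup>2))
          - (u * v * (x + y)\<^sup>2 + u * w * (x + z)\<^sup>2 + v * w * (y + z)\<^sup>2)
        = 2/3 * ((u * x - v * y)\<^sup>2 + (u * x - w * z)\<^sup>2 + (v * y - w * z)\<^sup>2)
          + 1/3 * (u * v * (x - y)\<^sup>2 + u * w * (x - z)\<^sup>2 + v * w * (y - z)\<^sup>2)"
    by (simp add: field_simps power2_eq_square)
  moreover have "0 \<le> 2/3 * ((u * x - v * y)\<^sup>2 + (u * x - w * z)\<^sup>2 + (v * y - w * z)\<^sup>2)
                    + 1/3 * (u * v * (x - y)\<^sup>2 + u * w * (x - z)\<^sup>2 + v * w * (y - z)\<^sup>2)"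
    using assms by (intro add_nonneg_nonneg mult_nonneg_nonneg) auto
  ultimately have "u * v * (x + y)\<^sup>2 + u * w * (x + z)\<^sup>2 + v * w * (y + z)\<^sup>2
                    \<le> (u + v + w) * (4/3 * (u * x\<^sup>2 + v * y\<^sup>2 + w * z\<^sup>2))"
    by linarith
  with assms(4) show ?thesis by simp
qed

lemma three_cballs_scaled_Int_nonempty:
  fixes c1 c2 c3 :: "'a::real_inner"
  assumes d12: "dist c1 c2 \<le> r1 + r2" and d13: "dist c1 c3 \<le> r1 + r3" and d23: "dist c2 c3 \<le> r2 + r3"
    and r: "0 \<le> r1" "0 \<le> r2" "0 \<le> r3"
  shows "cball c1 (2 / sqrt 3 * r1) \<inter> cball c2 (2 / sqrt 3 * r2) \<inter> cball c3 (2 / sqrt 3 * r3) \<noteq> {}"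
proof -
  define P where "P = {(c1 \<bullet> c1 - 4/3 * r1\<^sup>2, c1), (c2 \<bullet> c2 - 4/3 * r2\<^sup>2, c2), (c3 \<bullet> c3 - 4/3 * r3\<^sup>2, c3)}"
  have sq: "(dist a b)\<^sup>2 \<le> (r + s)\<^sup>2" if "dist a b \<le> r + s" for a b :: 'a and r s :: real
    using that by (simp add: power_mono)
  have "\<exists>p. \<forall>(a, c)\<in>P. (dist p c)\<^sup>2 \<le> c \<bullet> c - a"
  proof (rule common_point_of_balls_from_hull)
    fix a q assume "(a, q) \<in> convex hull P"
    then obtain u v w where uvw: "0 \<le> u" "0 \<le> v" "0 \<le> w" "u + v + w = 1"
      and a: "a = u * (c1 \<bullet> c1 - 4/3 * r1\<^sup>2) + v * (c2 \<bullet> c2 - 4/3 * r2\<^sup>2) + w * (c3 \<bullet> c3 - 4/3 * r3\<^sup>2)"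
      and q: "q = u *\<^sub>R c1 + v *\<^sub>R c2 + w *\<^sub>R c3"
      unfolding P_def convex_hull_3 by auto
    have "a - q \<bullet> q = u * v * (dist c1 c2)\<^sup>2 + u * w * (dist c1 c3)\<^sup>2 + v * w * (dist c2 c3)\<^sup>2
                        - 4/3 * (u * r1\<^sup>2 + v * r2\<^sup>2 + w * r3\<^sup>2)"
      using weighted_variance_3[OF uvw(4), of c1 c2 c3] unfolding a q by (simp add: algebra_simps)
    also have "\<dots> \<le> u * v * (r1 + r2)\<^sup>2 + u * w * (r1 + r3)\<^sup>2 + v * w * (r2 + r3)\<^sup>2
                     - 4/3 * (u * r1\<^sup>2 + v * r2\<^sup>2 + w * r3\<^sup>2)"
      using uvw sq[OF d12] sq[OF d13] sq[OF d23] by (intro diff_right_mono add_mono mult_left_mono) auto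
    also have "\<dots> \<le> 0"
      using weighted_sq_sum_le[OF uvw, of r1 r2 r3] by simp
    finally show "a \<le> q \<bullet> q" by simp
  qed (simp add: P_def)
  then obtain p where "(dist p c1)\<^sup>2 \<le> 4/3 * r1\<^sup>2" "(dist p c2)\<^sup>2 \<le> 4/3 * r2\<^sup>2" "(dist p c3)\<^sup>2 \<le> 4/3 * r3\<^sup>2"
    unfolding P_def by auto
  moreover have "dist c p \<le> 2 / sqrt 3 * r" if "(dist p c)\<^sup>2 \<le> 4/3 * r\<^sup>2" "0 \<le> r" for c and r :: real
  proof (rule power2_le_imp_le)
    show "(dist c p)\<^sup>2 \<le> (2 / sqrt 3 * r)\<^sup>2"
      using that(1) by (simp add: dist_commute power_mult_distrib power_divide)
  qed (use that(2) in simp)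
  ultimately have "p \<in> cball c1 (2 / sqrt 3 * r1) \<inter> cball c2 (2 / sqrt 3 * r2) \<inter> cball c3 (2 / sqrt 3 * r3)"
    using r by simp
  then show ?thesis by blast
qed

lemma cball_Int_cball_nonempty_iff:
  fixes a b :: "'a::real_normed_vector"
  assumes "0 \<le> r" "0 \<le> s"
  shows "cball a r \<inter> cball b s \<noteq> {} \<longleftrightarrow> dist a b \<le> r + s"
proof
  assume "cball a r \<inter> cball b s \<noteq> {}"
  then obtain x where "dist a x \<le> r" "dist b x \<le> s" by auto
  then show "dist a b \<le> r + s"
    using dist_triangle2[of a b x] by linarith
next
  assume ab: "dist a b \<le> r + s"
  show "cball a r \<inter> cball b s \<noteq> {}"
  proof (cases "r + s = 0")
    case True
    then have "a \<in> cball a r \<inter> cball b s"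
      using ab assms by auto
    then show ?thesis by blast
  next
    case False
    then have rs: "0 < r + s" using assms by linarith
    define x where "x = a + (r / (r + s)) *\<^sub>R (b - a)"
    have "b - x = (1 - r / (r + s)) *\<^sub>R (b - a)"
      unfolding x_def by (simp add: algebra_simps)
    also have "1 - r / (r + s) = s / (r + s)"
      using rs by (simp add: field_simps)
    finally have "dist b x = s / (r + s) * dist a b"
      using assms by (simp add: dist_norm norm_minus_commute)
    also have "\<dots> \<le> s / (r + s) * (r + s)"
      using ab rs assms by (intro mult_left_mono) auto
    finally have "dist b x \<le> s"
      using rs by simp
    have "dist a x = r / (r + s) * dist a b"
      using assms by (simp add: x_def dist_norm norm_minus_commute)
    also have "\<dots> \<le> r / (r + s) * (r + s)"
      using ab rs assms by (intro mult_left_mono) auto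
    finally have "dist a x \<le> r"
      using rs by simp
    with \<open>dist b x \<le> s\<close> have "x \<in> cball a r \<inter> cball b s" by simp
    then show ?thesis by blast
  qed
qed

lemma Helly_compact:
  fixes \<F> :: "'a::euclidean_space set set"
  assumes compact_convex: "\<And>S. S \<in> \<F> \<Longrightarrow> compact S \<and> convex S"
    and small: "\<And>\<T>. \<T> \<subseteq> \<F> \<Longrightarrow> finite \<T> \<Longrightarrow> card \<T> \<le> DIM('a) + 1 \<Longrightarrow> \<Inter>\<T> \<noteq> {}"
  shows "\<Inter>\<F> \<noteq> {}"
proof (cases "\<F> = {}")
  case False
  have finite_subfamily: "\<Inter>\<T> \<noteq> {}" if "\<T> \<subseteq> \<F>" "finite \<T>" for \<T>
  proof (cases "card \<T> \<le> DIM('a) + 1")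
    case False
    show ?thesis
    proof (rule Helly)
      show "DIM('a) + 1 \<le> card \<T>" "\<forall>S\<in>\<T>. convex S"
        using False that(1) compact_convex by auto
      show "\<Inter>\<S> \<noteq> {}" if "\<S> \<subseteq> \<T>" "card \<S> = DIM('a) + 1" for \<S>
        using that \<open>\<T> \<subseteq> \<F>\<close> by (intro small) (auto intro: card_ge_0_finite)
    qed
  qed (use that small in blast)
  from False obtain S where "S \<in> \<F>" by blast
  have "S \<inter> \<Inter>\<F> \<noteq> {}"
  proof (rule compact_imp_fip)
    show "compact S" "\<And>T. T \<in> \<F> \<Longrightarrow> closed T"
      using \<open>S \<in> \<F>\<close> compact_convex compact_imp_closed by blast+
    show "S \<inter> \<Inter>\<T> \<noteq> {}" if "finite \<T>" "\<T> \<subseteq> \<F>" for \<T>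
      using finite_subfamily[of "insert S \<T>"] that \<open>S \<in> \<F>\<close> by simp
  qed
  then show ?thesis by blast
qed simp

lemma card_le_3_obtains_triple:
  assumes "finite A" "card A \<le> 3" "A \<noteq> {}"
  obtains x y z where "A = {x, y, z}"
proof -
  have "0 < card A"
    using assms by (simp add: card_gt_0_iff)
  then have "card A = 1 \<or> card A = 2 \<or> card A = 3"
    using assms(2) by arith
  then show ?thesis
    by (auto simp: card_1_singleton_iff card_2_iff card_3_iff intro: that)
qed

lemma disk_set_scale_disk [simp]: "disk_set (scale_disk k d) = cball (fst d) (k * snd d)"
  by (simp add: disk_set_def scale_disk_def)

lemma pairwise_intersecting_iff_dist:
  assumes "valid_disks D"
  shows "pairwise_intersecting D \<longleftrightarrow> (\<forall>d\<in>D. \<forall>e\<in>D. dist (fst d) (fst e) \<le> snd d + snd e)"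
proof -
  have "0 \<le> snd d" if "d \<in> D" for d
    using assms that by (auto simp: valid_disks_def less_imp_le)
  then show ?thesis
    unfolding pairwise_intersecting_def disk_set_def by (simp add: cball_Int_cball_nonempty_iff)
qed

lemma pairwise_intersecting_scaled_common_point:
  assumes "valid_disks D" and "pairwise_intersecting D"
  shows "has_common_point (scale_disk (2 / sqrt 3) ` D)"
proof -
  have dist_centres: "dist (fst d) (fst e) \<le> snd d + snd e" if "d \<in> D" "e \<in> D" for d e
    using assms that pairwise_intersecting_iff_dist by blast
  let ?F = "(\<lambda>d. cball (fst d) (2 / sqrt 3 * snd d)) ` D"
  have "\<Inter>?F \<noteq> {}"
  proof (rule Helly_compact)
    show "compact S \<and> convex S" if "S \<in> ?F" for S
      using that by auto
    show "\<Inter>\<T> \<noteq> {}" if sub: "\<T> \<subseteq> ?F" and "finite \<T>" "card \<T> \<le> DIM(real^2) + 1" for \<T>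
    proof (cases "\<T> = {}")
      case False
      have "card \<T> \<le> 3"
        using \<open>card \<T> \<le> DIM(real^2) + 1\<close> by simp
      then obtain A B C where \<T>: "\<T> = {A, B, C}"
        using card_le_3_obtains_triple \<open>finite \<T>\<close> False by metis
      then have "A \<in> ?F" "B \<in> ?F" "C \<in> ?F"
        using sub by auto
      then obtain d1 d2 d3 where d: "d1 \<in> D" "d2 \<in> D" "d3 \<in> D"
        and "A = cball (fst d1) (2 / sqrt 3 * snd d1)" "B = cball (fst d2) (2 / sqrt 3 * snd d2)"
          "C = cball (fst d3) (2 / sqrt 3 * snd d3)"
        by blast
      moreover have "0 \<le> snd d" if "d \<in> D" for d
        using assms(1) that by (auto simp: valid_disks_def)
      ultimately show ?thesis
        using three_cballs_scaled_Int_nonempty[OF dist_centres[OF d(1,2)] dist_centres[OF d(1,3)]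
            dist_centres[OF d(2,3)]]
        by (simp add: \<T> Int_assoc)
    qed simp
  qed
  then obtain p where "p \<in> \<Inter>?F"
    by blast
  then show ?thesis
    unfolding has_common_point_def by auto
qed

lemma sum_sq_dist_centred_triangle:
  fixes p c1 c2 c3 :: "'a::real_inner"
  assumes "c1 + c2 + c3 = 0"
  shows "(dist p c1)\<^sup>2 + (dist p c2)\<^sup>2 + (dist p c3)\<^sup>2
           = 3 * (norm p)\<^sup>2 + (norm c1)\<^sup>2 + (norm c2)\<^sup>2 + (norm c3)\<^sup>2"
proof -
  have "p \<bullet> c1 + p \<bullet> c2 + p \<bullet> c3 = 0"
    using assms by (metis inner_add_right inner_zero_right)
  then show ?thesis
    unfolding dist_norm power2_norm_eq_inner by (simp add: inner_commute algebra_simps)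
qed

lemma centred_triangle_circumradius_le:
  fixes p c1 c2 c3 :: "'a::real_inner"
  assumes "c1 + c2 + c3 = 0" "norm c1 = R" "norm c2 = R" "norm c3 = R"
    and "dist p c1 \<le> l" "dist p c2 \<le> l" "dist p c3 \<le> l"
  shows "R \<le> l"
proof (rule power2_le_imp_le)
  have "3 * R\<^sup>2 \<le> (dist p c1)\<^sup>2 + (dist p c2)\<^sup>2 + (dist p c3)\<^sup>2"
    using sum_sq_dist_centred_triangle[OF assms(1), of p] assms(2-4) by simp
  also have "\<dots> \<le> l\<^sup>2 + l\<^sup>2 + l\<^sup>2"
    using assms(5-7) by (intro add_mono power_mono) auto
  finally show "R\<^sup>2 \<le> l\<^sup>2" by simp
  show "0 \<le> l"
    using assms(5) zero_le_dist order_trans by blast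
qed

lemma centred_triangle_side:
  fixes c1 c2 c3 :: "'a::real_inner"
  assumes "c1 + c2 + c3 = 0" "norm c1 = R" "norm c2 = R" "norm c3 = R"
  shows "dist c1 c2 = sqrt 3 * R"
proof -
  have sq: "c1 \<bullet> c1 = R\<^sup>2" "c2 \<bullet> c2 = R\<^sup>2" "c3 \<bullet> c3 = R\<^sup>2"
    using assms(2-4) by (metis power2_norm_eq_inner)+
  have "c3 = - (c1 + c2)"
    using assms(1) by (simp add: add_eq_0_iff2 add.assoc)
  have "R\<^sup>2 = 2 * R\<^sup>2 + 2 * (c1 \<bullet> c2)"
    using sq by (simp add: \<open>c3 = - (c1 + c2)\<close> inner_commute algebra_simps)
  then have "(dist c1 c2)\<^sup>2 = (sqrt 3 * R)\<^sup>2"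
    using sq unfolding dist_norm power2_norm_eq_inner
    by (simp add: power_mult_distrib inner_commute algebra_simps)
  moreover have "0 \<le> R"
    using assms(2) by auto
  ultimately show ?thesis
    by (simp add: power2_eq_iff_nonneg)
qed

lemma centred_equilateral_triangle_exists:
  assumes "0 \<le> R"
  shows "\<exists>c1 c2 c3 :: real^2. c1 + c2 + c3 = 0 \<and> norm c1 = R \<and> norm c2 = R \<and> norm c3 = R"
proof -
  define e1 e2 :: "real^2" where "e1 = axis 1 1" and "e2 = axis 2 1"
  have norm_comb: "norm (x *\<^sub>R e1 + y *\<^sub>R e2) = sqrt (x\<^sup>2 + y\<^sup>2)" for x y
    unfolding norm_eq_sqrt_inner e1_def e2_def by (simp add: inner_simps inner_axis_axis power2_eq_square)
  define h where "h = sqrt 3 / 2 * R"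
  define c1 c2 c3 where "c1 = 0 *\<^sub>R e1 + R *\<^sub>R e2"
    and "c2 = h *\<^sub>R e1 + (- R / 2) *\<^sub>R e2" and "c3 = (- h) *\<^sub>R e1 + (- R / 2) *\<^sub>R e2"
  have "c1 + c2 + c3 = (0 + h + - h) *\<^sub>R e1 + (R + - R / 2 + - R / 2) *\<^sub>R e2"
    unfolding c1_def c2_def c3_def by (simp only: scaleR_add_left add_ac)
  also have "\<dots> = 0"
    by simp
  finally have "c1 + c2 + c3 = 0" .
  moreover have "h\<^sup>2 + (- R / 2)\<^sup>2 = R\<^sup>2"
    by (simp add: h_def power_mult_distrib power_divide)
  then have "norm c1 = R" "norm c2 = R" "norm c3 = R"
    using assms unfolding c1_def c2_def c3_def norm_comb by simp_all
  ultimately show ?thesis by blast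
qed

lemma scaled_intersecting_disks_without_common_point:
  assumes "lam < 2 / sqrt 3"
  shows "\<exists>D. finite D \<and> valid_disks D \<and> pairwise_intersecting D \<and> \<not> has_common_point (scale_disk lam ` D)"
proof -
  obtain c1 c2 c3 :: "real^2"
    where c: "c1 + c2 + c3 = 0" "norm c1 = 2 / sqrt 3" "norm c2 = 2 / sqrt 3" "norm c3 = 2 / sqrt 3"
    using centred_equilateral_triangle_exists[of "2 / sqrt 3"] by auto
  have "dist c1 c2 = 2" "dist c1 c3 = 2" "dist c2 c3 = 2"
    using centred_triangle_side[of c1 c2 c3] centred_triangle_side[of c1 c3 c2]
      centred_triangle_side[of c2 c3 c1] c
    by (simp_all add: ac_simps)
  define D where "D = {(c1, 1::real), (c2, 1), (c3, 1)}"
  have "finite D" "valid_disks D"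
    by (auto simp: D_def valid_disks_def)
  moreover have "pairwise_intersecting D"
    using \<open>dist c1 c2 = 2\<close> \<open>dist c1 c3 = 2\<close> \<open>dist c2 c3 = 2\<close>
    unfolding pairwise_intersecting_iff_dist[OF \<open>valid_disks D\<close>] by (simp add: D_def dist_commute)
  moreover have "\<not> has_common_point (scale_disk lam ` D)"
  proof
    assume "has_common_point (scale_disk lam ` D)"
    then obtain p where "dist p c1 \<le> lam" "dist p c2 \<le> lam" "dist p c3 \<le> lam"
      unfolding has_common_point_def D_def by (auto simp: dist_commute)
    then have "2 / sqrt 3 \<le> lam"
      by (rule centred_triangle_circumradius_le[OF c])
    with assms show False by simp
  qed
  ultimately show ?thesis by blast
qed

theorem theorem6:
  shows "(\<forall>D::disk set. valid_disks D \<and> pairwise_intersecting D \<longrightarrow>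
            has_common_point (scale_disk (2 / sqrt 3) ` D))
       \<and> (\<forall>lam::real. lam < 2 / sqrt 3 \<longrightarrow>
            (\<exists>D::disk set. finite D \<and> valid_disks D \<and> pairwise_intersecting D \<and>
               \<not> has_common_point (scale_disk lam ` D)))"
  using pairwise_intersecting_scaled_common_point scaled_intersecting_disks_without_common_point
  by blast

end
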